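(* Assume ($\nu$0) and (H1), fix $\rho,h,r,\epsilon>0$, and let $\mu_1,\mu_2\in C([0,T],P(\mathbb{R}^d))$. Then there are constants $c,K>0$ depending only on $d$ such that $\sup_{t\in[0,T]}\|m^\epsilon_{\rho,h}[\mu_1](t,\cdot)-m^\epsilon_{\rho,h}[\mu_2](t,\cdot)\|_{L^1(\mathbb{R}^d)}\le\frac{cKT}{\rho}e^{-h\lambda_r}\big\|D_pH(\cdot,Du^\epsilon_{\rho,h}[\mu_1])-D_pH(\cdot,Du^\epsilon_{\rho,h}[\mu_2])\big\|_0$, where the sup norm on the right is over $[0,T]\times\mathbb{R}^d$.
   Context: $P(\mathbb{R}^d)$: Borel probability measures. $\|\cdot\|_0$ sup norm. $\nu$ nonnegative Radon measure on $\mathbb{R}^d\setminus\{0\}$, ($\nu$0) $\int1\wedge|z|^2\nu(dz)<\infty$. $H$ Hamiltonian; (H1) $D_pH$ continuous and $|D_pH(x,p)|\le C_R$ for $|p|\le R$. $m_0\in P(\mathbb{R}^d)$. Discretization: $h=T/N$, $t_k=kh$, $x_i=i\rho$ ($i\in\mathbb Z^d$), $\beta_i(x)=\prod_l\max\{0,1-|x_l-(x_i)_l|/\rho\}$; $b_r=\int_{r<|z|<1}z\nu(dz)$, $\sigma_r=(\frac12\int_{|z|<r}zz^T\nu(dz))^{1/2}$ with columns $\sigma_r^p$, $\lambda_r=\nu(\{|z|>r\})$. For each $\mu$, $u^\epsilon_{\rho,h}[\mu]$ is the mollified (in $x$, by a standard mollifier at scale $\epsilon$) piecewise multilinear interpolation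 of the solution of the discrete semi-Lagrangian HJB scheme with data $F(\cdot,\mu(t_k))$, $G(\cdot,\mu(T))$; it is smooth and Lipschitz in $x$. Discrete FPK: with $w=u^\epsilon_{\rho,h}[\mu]$, $\Phi^{\epsilon,\pm}_{j,k,p}=x_j-h(D_pH(x_j,Dw(t_k,x_j))+b_r)\pm\sqrt{hd}\sigma_r^p$, $\mathbf B(i,j,k)=\frac{e^{-h\lambda_r}}{2d}\sum_{p=1}^d(\beta_i(\Phi^{\epsilon,+}_{j,k,p})+\beta_i(\Phi^{\epsilon,-}_{j,k,p}))+\frac{1-e^{-h\lambda_r}}{\lambda_r}\int_{|z|>r}\beta_i(x_j+z)\nu(dz)$, $E_i=x_i+\frac\rho2(-1,1)^d$, $m_{i,0}=m_0(E_i)$, $m_{i,k+1}=\sum_jm_{j,k}\mathbf B(i,j,k)$; $m^\epsilon_{\rho,h}[\mu](t_k,x)=\rho^{-d}\sum_im_{i,k}\mathbb 1_{E_i}(x)$, linear in $t$ on $[t_k,t_{k+1}]$. *)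

theory Defs
  imports "HOL-Probability.Probability"
begin

definition gridpt :: "real \<Rightarrow> int^'n \<Rightarrow> real^'n" where
  "gridpt \<rho> i = (\<chi> l. \<rho> * of_int (i $ l))"

definition hatfun :: "real \<Rightarrow> int^'n \<Rightarrow> real^'n \<Rightarrow> real" where
  "hatfun \<rho> i x = (\<Prod>l\<in>UNIV. max 0 (1 - \<bar>x $ l - gridpt \<rho> i $ l\<bar> / \<rho>))"

definition cell :: "real \<Rightarrow> int^'n \<Rightarrow> (real^'n) set" where
  "cell \<rho> i = {x. \<forall>l. \<bar>x $ l - gridpt \<rho> i $ l\<bar> < \<rho> / 2}"

definition drift_b :: "(real^'n) measure \<Rightarrow> real \<Rightarrow> real^'n" where
  "drift_b \<nu> r = set_lebesgue_integral \<nu> {z. r < norm z \<and> norm z < 1} (\<lambda>z. z)"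

definition small_cov :: "(real^'n) measure \<Rightarrow> real \<Rightarrow> real^'n^'n" where
  "small_cov \<nu> r = (\<chi> i j. (1/2) * set_lebesgue_integral \<nu> {z. norm z < r} (\<lambda>z. z $ i * z $ j))"

definition psd_sqrt :: "real^'n^'n \<Rightarrow> real^'n^'n" where
  "psd_sqrt A = (THE S. transpose S = S \<and> (\<forall>v. 0 \<le> v \<bullet> (S *v v)) \<and> S ** S = A)"

definition sigma_col :: "(real^'n) measure \<Rightarrow> real \<Rightarrow> 'n \<Rightarrow> real^'n" where
  "sigma_col \<nu> r p = column p (psd_sqrt (small_cov \<nu> r))"

definition jump_rate :: "(real^'n) measure \<Rightarrow> real \<Rightarrow> real" where
  "jump_rate \<nu> r = measure \<nu> {z. r < norm z}"

text \<open>Transition weights B(i,j,k). DpH is D_pH; Dw t x is the spatial gradient of w = u[mu] at (t,x).\<close>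

definition Bker :: "(real^'n) measure \<Rightarrow> (real^'n \<Rightarrow> real^'n \<Rightarrow> real^'n)
    \<Rightarrow> (real \<Rightarrow> real^'n \<Rightarrow> real^'n) \<Rightarrow> real \<Rightarrow> real \<Rightarrow> real
    \<Rightarrow> nat \<Rightarrow> int^'n \<Rightarrow> int^'n \<Rightarrow> real" where
  "Bker \<nu> DpH Dw \<rho> h r k i j =
     (let xj = gridpt \<rho> j;
          lam = jump_rate \<nu> r;
          d = real CARD('n);
          c = xj - h *\<^sub>R (DpH xj (Dw (real k * h) xj) + drift_b \<nu> r)
      in exp (- h * lam) / (2 * d) *
           (\<Sum>p\<in>UNIV. hatfun \<rho> i (c + sqrt (h * d) *\<^sub>R sigma_col \<nu> r p)
                     + hatfun \<rho> i (c - sqrt (h * d) *\<^sub>R sigma_col \<nu> r p))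
         + (1 - exp (- h * lam)) / lam *
           set_lebesgue_integral \<nu> {z. r < norm z} (\<lambda>z. hatfun \<rho> i (xj + z)))"

fun fpk_mass :: "(real^'n) measure \<Rightarrow> (real^'n \<Rightarrow> real^'n \<Rightarrow> real^'n)
    \<Rightarrow> (real \<Rightarrow> real^'n \<Rightarrow> real^'n) \<Rightarrow> real \<Rightarrow> real \<Rightarrow> real
    \<Rightarrow> (real^'n) measure \<Rightarrow> nat \<Rightarrow> int^'n \<Rightarrow> real" where
  "fpk_mass \<nu> DpH Dw \<rho> h r m0 0 i = measure m0 (cell \<rho> i)"
| "fpk_mass \<nu> DpH Dw \<rho> h r m0 (Suc k) i =
     (\<Sum>\<^sub>\<infinity>j. fpk_mass \<nu> DpH Dw \<rho> h r m0 k j * Bker \<nu> DpH Dw \<rho> h r k i j)"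

definition fpk_dens_k :: "(real^'n) measure \<Rightarrow> (real^'n \<Rightarrow> real^'n \<Rightarrow> real^'n)
    \<Rightarrow> (real \<Rightarrow> real^'n \<Rightarrow> real^'n) \<Rightarrow> real \<Rightarrow> real \<Rightarrow> real
    \<Rightarrow> (real^'n) measure \<Rightarrow> nat \<Rightarrow> real^'n \<Rightarrow> real" where
  "fpk_dens_k \<nu> DpH Dw \<rho> h r m0 k x =
     (\<Sum>\<^sub>\<infinity>i. fpk_mass \<nu> DpH Dw \<rho> h r m0 k i * indicator (cell \<rho> i) x) / \<rho> ^ CARD('n)"

definition fpk_dens :: "(real^'n) measure \<Rightarrow> (real^'n \<Rightarrow> real^'n \<Rightarrow> real^'n)
    \<Rightarrow> (real \<Rightarrow> real^'n \<Rightarrow> real^'n) \<Rightarrow> real \<Rightarrow> real \<Rightarrow> real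
    \<Rightarrow> (real^'n) measure \<Rightarrow> real \<Rightarrow> real^'n \<Rightarrow> real" where
  "fpk_dens \<nu> DpH Dw \<rho> h r m0 t x =
     (let k = nat \<lfloor>t / h\<rfloor>; s = t / h - real k
      in (1 - s) * fpk_dens_k \<nu> DpH Dw \<rho> h r m0 k x
         + s * fpk_dens_k \<nu> DpH Dw \<rho> h r m0 (Suc k) x)"

definition weakly_continuous_flow :: "real \<Rightarrow> (real \<Rightarrow> (real^'n) measure) \<Rightarrow> bool" where
  "weakly_continuous_flow T \<mu> \<longleftrightarrow>
     (\<forall>t\<in>{0..T}. prob_space (\<mu> t) \<and> sets (\<mu> t) = sets borel) \<and>
     (\<forall>f::real^'n \<Rightarrow> real. continuous_on UNIV f \<and> bounded (range f) \<longrightarrow>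
        continuous_on {0..T} (\<lambda>t. integral\<^sup>L (\<mu> t) f))"

end

theory Submission
  imports Defs
begin

text \<open>
  The scheme transports masses by \<open>m\<^sub>k\<^sub>+\<^sub>1 = B\<^sub>k\<^sup>T m\<^sub>k\<close> with a substochastic matrix \<open>B\<^sub>k\<close>: the hat
  functions form a partition of unity and the jump part integrates to at most \<open>\<lambda>\<^sub>r\<close>.
  The kernels built from \<open>\<mu>\<^sub>1\<close> and \<open>\<mu>\<^sub>2\<close> differ only through the foot of the characteristic,
  which moves by \<open>h |\<Delta>D\<^sub>pH|\<close>; as \<open>\<Sum>\<^sub>i |\<beta>\<^sub>i(x) - \<beta>\<^sub>i(y)| \<le> L |x - y| / \<rho>\<close> with \<open>L\<close> depending only
  on \<open>d\<close>, the columns of \<open>B\<^sub>k\<^sup>1 - B\<^sub>k\<^sup>2\<close> have \<open>l\<^sup>1\<close> norm at most \<open>e\<^sup>-\<^sup>h\<^sup>\<lambda> L h |\<Delta>D\<^sub>pH| / \<rho>\<close>.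
  Writing \<open>m\<^sup>1B\<^sup>1 - m\<^sup>2B\<^sup>2 = (m\<^sup>1 - m\<^sup>2)B\<^sup>1 + m\<^sup>2(B\<^sup>1 - B\<^sup>2)\<close>, the \<open>l\<^sup>1\<close> distance of the masses grows by
  at most this amount per step, hence by \<open>e\<^sup>-\<^sup>h\<^sup>\<lambda> L T |\<Delta>D\<^sub>pH| / \<rho>\<close> after \<open>N = T/h\<close> steps. The
  densities are constant on disjoint cells of volume \<open>\<rho>\<^sup>d\<close> and interpolate linearly in time,
  so their \<open>L\<^sup>1\<close> distance is bounded by the same quantity.
\<close>

section \<open>Hat functions\<close>

lemma gridpt_nth [simp]: "gridpt \<rho> i $ l = \<rho> * of_int (i $ l)"
  by (simp add: gridpt_def)

definition tent :: "real \<Rightarrow> real \<Rightarrow> int \<Rightarrow> real" where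
  "tent \<rho> t n = max 0 (1 - \<bar>t - \<rho> * of_int n\<bar> / \<rho>)"

lemma hatfun_eq_prod_tent: "hatfun \<rho> i x = (\<Prod>l\<in>UNIV. tent \<rho> (x $ l) (i $ l))"
  by (simp add: hatfun_def tent_def)

lemma tent_eq_scaled:
  assumes "\<rho> > 0"
  shows "tent \<rho> t n = max 0 (1 - \<bar>t / \<rho> - of_int n\<bar>)"
proof -
  have "\<bar>t - \<rho> * of_int n\<bar> / \<rho> = \<bar>(t - \<rho> * of_int n) / \<rho>\<bar>"
    using assms by simp
  also have "\<dots> = \<bar>t / \<rho> - of_int n\<bar>"
    using assms by (simp add: diff_divide_distrib)
  finally show ?thesis by (simp add: tent_def)
qed

lemma tent_nonneg: "0 \<le> tent \<rho> t n"
  by (simp add: tent_def)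

lemma tent_le_one: "\<rho> > 0 \<Longrightarrow> tent \<rho> t n \<le> 1"
  by (simp add: tent_def)

lemma tent_lipschitz:
  assumes "\<rho> > 0"
  shows "\<bar>tent \<rho> s n - tent \<rho> t n\<bar> \<le> \<bar>s - t\<bar> / \<rho>"
proof -
  have max_contr: "\<bar>max 0 u - max 0 v\<bar> \<le> \<bar>u - v\<bar>" for u v :: real
    by (auto simp: max_def)
  have "\<bar>tent \<rho> s n - tent \<rho> t n\<bar> \<le> \<bar>\<bar>t - \<rho> * of_int n\<bar> - \<bar>s - \<rho> * of_int n\<bar>\<bar> / \<rho>"
    using max_contr[of "1 - \<bar>s - \<rho> * of_int n\<bar> / \<rho>" "1 - \<bar>t - \<rho> * of_int n\<bar> / \<rho>"] assms
    by (simp add: tent_def diff_divide_distrib[symmetric] abs_divide)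
  also have "\<dots> \<le> \<bar>s - t\<bar> / \<rho>"
    using abs_triangle_ineq3[of "t - \<rho> * of_int n" "s - \<rho> * of_int n"] assms
    by (intro divide_right_mono) auto
  finally show ?thesis .
qed

definition tent_window :: "real \<Rightarrow> real \<Rightarrow> int set" where
  "tent_window \<rho> t = {\<lfloor>t / \<rho>\<rfloor> - 1 .. \<lfloor>t / \<rho>\<rfloor> + 2}"

lemma finite_tent_window: "finite (tent_window \<rho> t)"
  by (simp add: tent_window_def)

lemma card_tent_window: "card (tent_window \<rho> t) = 4"
  by (simp add: tent_window_def)

lemma tent_nonzero_in_window:
  assumes "\<rho> > 0" and "\<bar>s - t\<bar> < \<rho>" and "tent \<rho> s n \<noteq> 0"
  shows "n \<in> tent_window \<rho> t"
proof -
  have "\<bar>s / \<rho> - of_int n\<bar> < 1"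
    using assms(1,3) by (auto simp: tent_eq_scaled max_def split: if_splits)
  moreover have "\<bar>s / \<rho> - t / \<rho>\<bar> < 1"
    using assms(1,2) by (simp add: diff_divide_distrib[symmetric])
  moreover have "of_int \<lfloor>t / \<rho>\<rfloor> \<le> t / \<rho>" "t / \<rho> < of_int \<lfloor>t / \<rho>\<rfloor> + 1"
    by linarith+
  ultimately show ?thesis
    unfolding tent_window_def by simp linarith
qed

lemma sum_tent_window:
  assumes "\<rho> > 0"
  shows "(\<Sum>n\<in>tent_window \<rho> t. tent \<rho> t n) = 1"
proof -
  define a where "a = \<lfloor>t / \<rho>\<rfloor>"
  have a: "of_int a \<le> t / \<rho>" "t / \<rho> < of_int a + 1"
    unfolding a_def by linarith+
  have "tent_window \<rho> t = {a - 1, a, a + 1, a + 2}"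
    by (auto simp: tent_window_def a_def)
  moreover have "tent \<rho> t (a - 1) = 0" "tent \<rho> t (a + 2) = 0"
    "tent \<rho> t a = 1 - (t / \<rho> - of_int a)" "tent \<rho> t (a + 1) = t / \<rho> - of_int a"
    using a by (simp_all add: tent_eq_scaled[OF assms])
  ultimately show ?thesis
    by simp
qed

text \<open>The at most \<open>4\<^sup>d\<close> grid indices whose hat function can be nonzero within distance \<open>\<rho>\<close> of \<open>x\<close>.\<close>

definition hat_window :: "real \<Rightarrow> real^'n \<Rightarrow> (int^'n) set" where
  "hat_window \<rho> x = {i. \<forall>l. i $ l \<in> tent_window \<rho> (x $ l)}"

lemma hat_window_eq_image:
  "hat_window \<rho> x = vec_lambda ` PiE UNIV (\<lambda>l. tent_window \<rho> (x $ l))"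
proof
  show "hat_window \<rho> x \<subseteq> vec_lambda ` PiE UNIV (\<lambda>l. tent_window \<rho> (x $ l))"
  proof
    fix i assume "i \<in> hat_window \<rho> x"
    hence "(\<lambda>l. i $ l) \<in> PiE UNIV (\<lambda>l. tent_window \<rho> (x $ l))"
      by (auto simp: hat_window_def)
    moreover have "i = vec_lambda (\<lambda>l. i $ l)"
      by simp
    ultimately show "i \<in> vec_lambda ` PiE UNIV (\<lambda>l. tent_window \<rho> (x $ l))"
      by blast
  qed
qed (auto simp: hat_window_def)

lemma inj_on_vec_lambda: "inj_on (vec_lambda :: ('n::finite \<Rightarrow> 'a) \<Rightarrow> 'a^'n) A"
  by (auto simp: inj_on_def vec_lambda_inject)

lemma finite_hat_window: "finite (hat_window \<rho> x)"
  unfolding hat_window_eq_image by (intro finite_imageI finite_PiE) (auto simp: finite_tent_window)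

lemma card_hat_window: "card (hat_window \<rho> (x::real^'n)) = 4 ^ CARD('n)"
  unfolding hat_window_eq_image
  by (simp add: card_image inj_on_vec_lambda card_PiE card_tent_window)

lemma sum_hat_window:
  assumes "\<rho> > 0"
  shows "(\<Sum>i\<in>hat_window \<rho> x. hatfun \<rho> i x) = 1"
proof -
  have "(\<Sum>i\<in>hat_window \<rho> x. hatfun \<rho> i x)
      = (\<Sum>f\<in>PiE UNIV (\<lambda>l. tent_window \<rho> (x $ l)). \<Prod>l\<in>UNIV. tent \<rho> (x $ l) (f l))"
    unfolding hat_window_eq_image by (simp add: sum.reindex inj_on_vec_lambda hatfun_eq_prod_tent)
  also have "\<dots> = (\<Prod>l\<in>UNIV. \<Sum>n\<in>tent_window \<rho> (x $ l). tent \<rho> (x $ l) n)"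
    by (rule prod_sum_PiE[symmetric]) (auto simp: finite_tent_window)
  also have "\<dots> = 1"
    by (simp add: sum_tent_window[OF assms])
  finally show ?thesis .
qed

lemma hatfun_nonneg: "0 \<le> hatfun \<rho> i x"
  by (simp add: hatfun_eq_prod_tent prod_nonneg tent_nonneg)

lemma hatfun_le_one: "\<rho> > 0 \<Longrightarrow> hatfun \<rho> i x \<le> 1"
  by (simp add: hatfun_eq_prod_tent prod_le_1 tent_nonneg tent_le_one)

lemma hatfun_nonzero_in_window:
  assumes "\<rho> > 0" and "norm (x - y) < \<rho>" and "hatfun \<rho> i y \<noteq> 0"
  shows "i \<in> hat_window \<rho> x"
  unfolding hat_window_def
proof (intro CollectI allI)
  fix l
  have "\<bar>y $ l - x $ l\<bar> < \<rho>"
    using component_le_norm_cart[of "y - x" l] assms(2) by (simp add: norm_minus_commute)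
  moreover have "tent \<rho> (y $ l) (i $ l) \<noteq> 0"
    using assms(3) by (auto simp: hatfun_eq_prod_tent)
  ultimately show "i $ l \<in> tent_window \<rho> (x $ l)"
    using tent_nonzero_in_window[OF assms(1)] by blast
qed

lemma hatfun_nonzero_in_own_window: "\<rho> > 0 \<Longrightarrow> hatfun \<rho> i x \<noteq> 0 \<Longrightarrow> i \<in> hat_window \<rho> x"
  using hatfun_nonzero_in_window[of \<rho> x x i] by simp

lemma sum_hatfun_le_one:
  assumes "\<rho> > 0" and "finite F"
  shows "(\<Sum>i\<in>F. hatfun \<rho> i x) \<le> 1"
proof -
  have "(\<Sum>i\<in>F. hatfun \<rho> i x) = (\<Sum>i\<in>F \<inter> hat_window \<rho> x. hatfun \<rho> i x)"
    by (rule sum.mono_neutral_right) (use hatfun_nonzero_in_own_window[OF assms(1)] assms(2) in auto)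
  also have "\<dots> \<le> (\<Sum>i\<in>hat_window \<rho> x. hatfun \<rho> i x)"
    by (rule sum_mono2) (auto simp: finite_hat_window hatfun_nonneg)
  finally show ?thesis
    using sum_hat_window[OF assms(1), of x] by simp
qed

lemma abs_prod_diff_le_sum:
  fixes a b :: "'a \<Rightarrow> real"
  assumes "finite S" "\<And>l. 0 \<le> a l" "\<And>l. a l \<le> 1" "\<And>l. 0 \<le> b l" "\<And>l. b l \<le> 1"
  shows "\<bar>prod a S - prod b S\<bar> \<le> (\<Sum>l\<in>S. \<bar>a l - b l\<bar>)"
  using assms(1)
proof (induction S rule: finite_induct)
  case (insert l S)
  have "prod a (insert l S) - prod b (insert l S) = a l * (prod a S - prod b S) + (a l - b l) * prod b S"
    using insert by (simp add: algebra_simps)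
  moreover have "\<bar>a l * (prod a S - prod b S)\<bar> \<le> \<bar>prod a S - prod b S\<bar>"
    using assms(2,3)[of l] by (simp add: abs_mult mult_left_le_one_le)
  moreover have "\<bar>(a l - b l) * prod b S\<bar> \<le> \<bar>a l - b l\<bar>"
    using assms(4,5) by (simp add: abs_mult prod_nonneg prod_le_1 mult_right_le_one_le)
  ultimately show ?case
    using insert by simp
qed simp

lemma hatfun_lipschitz:
  fixes x y :: "real^'n"
  assumes "\<rho> > 0"
  shows "\<bar>hatfun \<rho> i x - hatfun \<rho> i y\<bar> \<le> real CARD('n) * norm (x - y) / \<rho>"
proof -
  have "\<bar>hatfun \<rho> i x - hatfun \<rho> i y\<bar> \<le> (\<Sum>l\<in>UNIV. \<bar>tent \<rho> (x $ l) (i $ l) - tent \<rho> (y $ l) (i $ l)\<bar>)"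
    unfolding hatfun_eq_prod_tent
    by (rule abs_prod_diff_le_sum) (auto simp: tent_nonneg tent_le_one assms)
  also have "\<dots> \<le> (\<Sum>l\<in>(UNIV::'n set). norm (x - y) / \<rho>)"
  proof (rule sum_mono)
    fix l
    show "\<bar>tent \<rho> (x $ l) (i $ l) - tent \<rho> (y $ l) (i $ l)\<bar> \<le> norm (x - y) / \<rho>"
      using tent_lipschitz[OF assms, of "x $ l" "i $ l" "y $ l"] component_le_norm_cart[of "x - y" l] assms
      by (smt (verit, best) divide_right_mono vector_minus_component)
  qed
  finally show ?thesis
    by simp
qed

definition hat_lip_const :: "nat \<Rightarrow> real" where
  "hat_lip_const d = 4 ^ d * real d + 2"

lemma hat_lip_const_pos: "hat_lip_const d > 0"
  by (simp add: hat_lip_const_def add_nonneg_pos)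

text \<open>For \<open>|x - y| < \<rho>\<close> only the \<open>4\<^sup>d\<close> indices of the window of \<open>x\<close> contribute, each with
  Lipschitz constant \<open>d/\<rho>\<close>; otherwise the partition of unity bounds the sum by \<open>2 \<le> 2|x - y|/\<rho>\<close>.\<close>

lemma sum_abs_hatfun_diff_le:
  fixes x y :: "real^'n"
  assumes "\<rho> > 0" and "finite F"
  shows "(\<Sum>i\<in>F. \<bar>hatfun \<rho> i x - hatfun \<rho> i y\<bar>) \<le> hat_lip_const CARD('n) * norm (x - y) / \<rho>"
proof (cases "norm (x - y) < \<rho>")
  case True
  have "(\<Sum>i\<in>F. \<bar>hatfun \<rho> i x - hatfun \<rho> i y\<bar>)
      = (\<Sum>i\<in>F \<inter> hat_window \<rho> x. \<bar>hatfun \<rho> i x - hatfun \<rho> i y\<bar>)"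
  proof (rule sum.mono_neutral_right)
    show "\<forall>i\<in>F - F \<inter> hat_window \<rho> x. \<bar>hatfun \<rho> i x - hatfun \<rho> i y\<bar> = 0"
    proof
      fix i assume "i \<in> F - F \<inter> hat_window \<rho> x"
      hence "hatfun \<rho> i x = 0" "hatfun \<rho> i y = 0"
        using hatfun_nonzero_in_own_window[OF assms(1)] hatfun_nonzero_in_window[OF assms(1) True]
        by blast+
      thus "\<bar>hatfun \<rho> i x - hatfun \<rho> i y\<bar> = 0"
        by simp
    qed
  qed (use assms(2) in auto)
  also have "\<dots> \<le> (\<Sum>i\<in>hat_window \<rho> x. \<bar>hatfun \<rho> i x - hatfun \<rho> i y\<bar>)"
    by (rule sum_mono2) (auto simp: finite_hat_window)
  also have "\<dots> \<le> (\<Sum>i\<in>hat_window \<rho> x. real CARD('n) * norm (x - y) / \<rho>)"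
    by (rule sum_mono) (rule hatfun_lipschitz[OF assms(1)])
  also have "\<dots> \<le> hat_lip_const CARD('n) * norm (x - y) / \<rho>"
    using assms(1) by (simp add: card_hat_window hat_lip_const_def field_simps)
  finally show ?thesis .
next
  case False
  have "(\<Sum>i\<in>F. \<bar>hatfun \<rho> i x - hatfun \<rho> i y\<bar>) \<le> (\<Sum>i\<in>F. hatfun \<rho> i x + hatfun \<rho> i y)"
    by (rule sum_mono) (use hatfun_nonneg in \<open>auto simp: abs_if\<close>)
  also have "\<dots> \<le> 2"
    using sum_hatfun_le_one[OF assms, of x] sum_hatfun_le_one[OF assms, of y]
    by (simp add: sum.distrib)
  also have "2 \<le> 2 * norm (x - y) / \<rho>"
    using False assms(1) by (simp add: field_simps)
  also have "\<dots> \<le> hat_lip_const CARD('n) * norm (x - y) / \<rho>"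
    using assms(1) by (intro divide_right_mono mult_right_mono) (auto simp: hat_lip_const_def)
  finally show ?thesis .
qed

lemma continuous_on_hatfun: "\<rho> > 0 \<Longrightarrow> continuous_on UNIV (hatfun \<rho> i)"
  unfolding hatfun_def by (intro continuous_intros) auto

section \<open>The transition kernel\<close>

definition char_foot :: "(real^'n) measure \<Rightarrow> (real^'n \<Rightarrow> real^'n \<Rightarrow> real^'n)
    \<Rightarrow> (real \<Rightarrow> real^'n \<Rightarrow> real^'n) \<Rightarrow> real \<Rightarrow> real \<Rightarrow> real \<Rightarrow> nat \<Rightarrow> int^'n \<Rightarrow> real^'n" where
  "char_foot \<nu> DpH Dw \<rho> h r k j =
     gridpt \<rho> j - h *\<^sub>R (DpH (gridpt \<rho> j) (Dw (real k * h) (gridpt \<rho> j)) + drift_b \<nu> r)"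

definition diffusion_sum :: "(real^'n) measure \<Rightarrow> real \<Rightarrow> real \<Rightarrow> real \<Rightarrow> int^'n \<Rightarrow> real^'n \<Rightarrow> real" where
  "diffusion_sum \<nu> \<rho> h r i c =
     (\<Sum>p\<in>UNIV. hatfun \<rho> i (c + sqrt (h * real CARD('n)) *\<^sub>R sigma_col \<nu> r p)
              + hatfun \<rho> i (c - sqrt (h * real CARD('n)) *\<^sub>R sigma_col \<nu> r p))"

definition jump_integral :: "(real^'n) measure \<Rightarrow> real \<Rightarrow> real \<Rightarrow> int^'n \<Rightarrow> real^'n \<Rightarrow> real" where
  "jump_integral \<nu> \<rho> r i x = set_lebesgue_integral \<nu> {z. r < norm z} (\<lambda>z. hatfun \<rho> i (x + z))"

lemma Bker_eq:
  fixes \<nu> :: "(real^'n) measure"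
  shows "Bker \<nu> DpH Dw \<rho> h r k i j =
    exp (- h * jump_rate \<nu> r) / (2 * real CARD('n)) * diffusion_sum \<nu> \<rho> h r i (char_foot \<nu> DpH Dw \<rho> h r k j)
    + (1 - exp (- h * jump_rate \<nu> r)) / jump_rate \<nu> r * jump_integral \<nu> \<rho> r i (gridpt \<rho> j)"
  unfolding Bker_def Let_def diffusion_sum_def char_foot_def jump_integral_def ..

lemma diffusion_sum_nonneg: "0 \<le> diffusion_sum \<nu> \<rho> h r i c"
  unfolding diffusion_sum_def by (intro sum_nonneg add_nonneg_nonneg hatfun_nonneg)

lemma jump_integral_nonneg: "0 \<le> jump_integral \<nu> \<rho> r i x"
  unfolding jump_integral_def set_lebesgue_integral_def
  by (rule Bochner_Integration.integral_nonneg) (simp add: hatfun_nonneg)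

lemma jump_rate_nonneg: "0 \<le> jump_rate \<nu> r"
  by (simp add: jump_rate_def)

lemma sum_diffusion_sum_le:
  assumes "\<rho> > 0" and "finite F"
  shows "(\<Sum>i\<in>F. diffusion_sum \<nu> \<rho> h r i (c::real^'n)) \<le> 2 * real CARD('n)"
proof -
  have "(\<Sum>i\<in>F. diffusion_sum \<nu> \<rho> h r i c)
      = (\<Sum>p\<in>UNIV. (\<Sum>i\<in>F. hatfun \<rho> i (c + sqrt (h * real CARD('n)) *\<^sub>R sigma_col \<nu> r p))
                  + (\<Sum>i\<in>F. hatfun \<rho> i (c - sqrt (h * real CARD('n)) *\<^sub>R sigma_col \<nu> r p)))"
    unfolding diffusion_sum_def by (simp add: sum.swap[of _ F] sum.distrib)
  also have "\<dots> \<le> (\<Sum>p\<in>(UNIV::'n set). 1 + 1)"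
    by (intro sum_mono add_mono sum_hatfun_le_one assms)
  finally show ?thesis
    by simp
qed

lemma sum_abs_diffusion_sum_diff_le:
  assumes "\<rho> > 0" and "finite F"
  shows "(\<Sum>i\<in>F. \<bar>diffusion_sum \<nu> \<rho> h r i (c1::real^'n) - diffusion_sum \<nu> \<rho> h r i c2\<bar>)
           \<le> 2 * real CARD('n) * (hat_lip_const CARD('n) * norm (c1 - c2) / \<rho>)"
proof -
  define s where "s p = sqrt (h * real CARD('n)) *\<^sub>R sigma_col \<nu> r p" for p
  define L where "L = hat_lip_const CARD('n) * norm (c1 - c2) / \<rho>"
  have "(\<Sum>i\<in>F. \<bar>diffusion_sum \<nu> \<rho> h r i c1 - diffusion_sum \<nu> \<rho> h r i c2\<bar>)
      \<le> (\<Sum>i\<in>F. \<Sum>p\<in>UNIV. \<bar>hatfun \<rho> i (c1 + s p) - hatfun \<rho> i (c2 + s p)\<bar>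
                          + \<bar>hatfun \<rho> i (c1 - s p) - hatfun \<rho> i (c2 - s p)\<bar>)"
  proof (rule sum_mono)
    fix i
    have "\<bar>diffusion_sum \<nu> \<rho> h r i c1 - diffusion_sum \<nu> \<rho> h r i c2\<bar>
        = \<bar>\<Sum>p\<in>UNIV. (hatfun \<rho> i (c1 + s p) - hatfun \<rho> i (c2 + s p))
                    + (hatfun \<rho> i (c1 - s p) - hatfun \<rho> i (c2 - s p))\<bar>"
      unfolding diffusion_sum_def s_def by (simp add: sum_subtractf[symmetric] algebra_simps)
    also have "\<dots> \<le> (\<Sum>p\<in>UNIV. \<bar>hatfun \<rho> i (c1 + s p) - hatfun \<rho> i (c2 + s p)\<bar>
                              + \<bar>hatfun \<rho> i (c1 - s p) - hatfun \<rho> i (c2 - s p)\<bar>)"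
      by (intro order.trans[OF sum_abs] sum_mono abs_triangle_ineq)
    finally show "\<bar>diffusion_sum \<nu> \<rho> h r i c1 - diffusion_sum \<nu> \<rho> h r i c2\<bar> \<le> \<dots>" .
  qed
  also have "\<dots> = (\<Sum>p\<in>UNIV. (\<Sum>i\<in>F. \<bar>hatfun \<rho> i (c1 + s p) - hatfun \<rho> i (c2 + s p)\<bar>)
                          + (\<Sum>i\<in>F. \<bar>hatfun \<rho> i (c1 - s p) - hatfun \<rho> i (c2 - s p)\<bar>))"
    by (simp add: sum.swap[of _ F] sum.distrib)
  also have "\<dots> \<le> (\<Sum>p\<in>(UNIV::'n set). L + L)"
  proof (intro sum_mono add_mono)
    fix p
    show "(\<Sum>i\<in>F. \<bar>hatfun \<rho> i (c1 + s p) - hatfun \<rho> i (c2 + s p)\<bar>) \<le> L"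
      using sum_abs_hatfun_diff_le[OF assms, of "c1 + s p" "c2 + s p"] by (simp add: L_def)
    show "(\<Sum>i\<in>F. \<bar>hatfun \<rho> i (c1 - s p) - hatfun \<rho> i (c2 - s p)\<bar>) \<le> L"
      using sum_abs_hatfun_diff_le[OF assms, of "c1 - s p" "c2 - s p"] by (simp add: L_def)
  qed
  finally show ?thesis
    by (simp add: L_def algebra_simps)
qed

lemma large_jumps_in_sets:
  assumes "sets \<nu> = sets borel"
  shows "{z::real^'n. r < norm z} \<in> sets \<nu>"
proof -
  have "open {z::real^'n. r < norm z}"
    by (intro open_Collect_less continuous_intros)
  thus ?thesis
    using assms by simp
qed

lemma emeasure_large_jumps_finite:
  fixes \<nu> :: "(real^'n) measure"
  assumes sets: "sets \<nu> = sets borel"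
    and levy: "(\<integral>\<^sup>+ z. ennreal (min 1 (norm z ^ 2)) \<partial>\<nu>) < \<infinity>"
    and "r > 0"
  shows "emeasure \<nu> {z. r < norm z} < \<infinity>"
proof -
  define A where "A = {z::real^'n. r < norm z}"
  define c where "c = min 1 (r ^ 2)"
  have "c > 0"
    using \<open>r > 0\<close> by (simp add: c_def)
  have "ennreal c * emeasure \<nu> A = (\<integral>\<^sup>+ z. ennreal c * indicator A z \<partial>\<nu>)"
    using large_jumps_in_sets[OF sets] by (simp add: A_def nn_integral_cmult_indicator)
  also have "\<dots> \<le> (\<integral>\<^sup>+ z. ennreal (min 1 (norm z ^ 2)) \<partial>\<nu>)"
  proof (rule nn_integral_mono)
    fix z
    have "z \<in> A \<Longrightarrow> r ^ 2 \<le> norm z ^ 2"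
      using \<open>r > 0\<close> by (auto simp: A_def intro!: power_mono)
    hence "z \<in> A \<Longrightarrow> c \<le> min 1 (norm z ^ 2)"
      by (auto simp: c_def)
    thus "ennreal c * indicator A z \<le> ennreal (min 1 (norm z ^ 2))"
      by (cases "z \<in> A") auto
  qed
  finally have "ennreal c * emeasure \<nu> A < \<infinity>"
    using levy by order
  thus ?thesis
    using \<open>c > 0\<close> by (auto simp: A_def ennreal_mult_less_top)
qed

lemma sum_jump_integral_le:
  fixes \<nu> :: "(real^'n) measure"
  assumes sets: "sets \<nu> = sets borel" and fin: "emeasure \<nu> {z. r < norm z} < \<infinity>"
    and "\<rho> > 0" and "finite F"
  shows "(\<Sum>i\<in>F. jump_integral \<nu> \<rho> r i x) \<le> jump_rate \<nu> r"
proof -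
  define A where "A = {z::real^'n. r < norm z}"
  have A: "A \<in> sets \<nu>"
    unfolding A_def by (rule large_jumps_in_sets[OF sets])
  have ind: "integrable \<nu> (indicator A :: _ \<Rightarrow> real)"
    using A fin by (simp add: A_def)
  have "(\<lambda>z. hatfun \<rho> i (x + z)) \<in> borel_measurable borel" for i
    by (intro borel_measurable_continuous_onI continuous_on_compose2[OF continuous_on_hatfun[OF \<open>\<rho> > 0\<close>]])
      (auto intro: continuous_intros)
  hence "(\<lambda>z. hatfun \<rho> i (x + z)) \<in> borel_measurable \<nu>" for i
    by (simp add: measurable_cong_sets[OF sets refl])
  hence "(\<lambda>z. indicator A z *\<^sub>R hatfun \<rho> i (x + z)) \<in> borel_measurable \<nu>" for i
    using A by measurable
  hence int: "integrable \<nu> (\<lambda>z. indicator A z *\<^sub>R hatfun \<rho> i (x + z))" for i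
    by (rule Bochner_Integration.integrable_bound[OF ind])
      (auto simp: indicator_def hatfun_nonneg hatfun_le_one[OF \<open>\<rho> > 0\<close>])
  have "(\<Sum>i\<in>F. jump_integral \<nu> \<rho> r i x) = integral\<^sup>L \<nu> (\<lambda>z. \<Sum>i\<in>F. indicator A z *\<^sub>R hatfun \<rho> i (x + z))"
    unfolding jump_integral_def set_lebesgue_integral_def A_def[symmetric]
    by (rule Bochner_Integration.integral_sum[symmetric]) (rule int)
  also have "\<dots> \<le> integral\<^sup>L \<nu> (indicator A)"
  proof (rule Bochner_Integration.integral_mono'[OF ind])
    fix z
    have "indicator A z * (\<Sum>i\<in>F. hatfun \<rho> i (x + z)) \<le> indicator A z * 1"
      by (rule mult_left_mono) (auto simp: sum_hatfun_le_one[OF \<open>\<rho> > 0\<close> \<open>finite F\<close>])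
    thus "(\<Sum>i\<in>F. indicator A z *\<^sub>R hatfun \<rho> i (x + z)) \<le> indicator A z"
      by (simp add: sum_distrib_left)
  qed simp
  also have "\<dots> = jump_rate \<nu> r"
    using A by (simp add: jump_rate_def A_def Int_absorb2 sets.sets_into_space)
  finally show ?thesis .
qed

text \<open>Column sums are taken over finite sets of row indices only, so that no summability
  of the rows over \<open>\<int>\<^sup>d\<close> has to be established.\<close>

definition substochastic :: "('i \<Rightarrow> 'j \<Rightarrow> real) \<Rightarrow> bool" where
  "substochastic B \<longleftrightarrow> (\<forall>i j. 0 \<le> B i j) \<and> (\<forall>F j. finite F \<longrightarrow> (\<Sum>i\<in>F. B i j) \<le> 1)"

lemma substochastic_le_one: "substochastic B \<Longrightarrow> B i j \<le> 1"
  unfolding substochastic_def by (metis finite.emptyI finite_insert sum.insert empty_iff sum.empty add_0_right)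

lemma substochastic_Bker:
  fixes \<nu> :: "(real^'n) measure"
  assumes sets: "sets \<nu> = sets borel" and fin: "emeasure \<nu> {z. r < norm z} < \<infinity>"
    and "\<rho> > 0" and "0 \<le> h"
  shows "substochastic (Bker \<nu> DpH Dw \<rho> h r k)"
proof -
  define lam where "lam = jump_rate \<nu> r"
  define E where "E = exp (- h * lam)"
  define d where "d = real CARD('n)"
  have lam: "0 \<le> lam"
    by (simp add: lam_def jump_rate_nonneg)
  have E: "0 < E" "E \<le> 1"
    using \<open>0 \<le> h\<close> lam by (auto simp: E_def)
  have d: "d > 0"
    by (simp add: d_def)
  have "(\<Sum>i\<in>F. Bker \<nu> DpH Dw \<rho> h r k i j) \<le> 1" if "finite F" for F j
  proof -
    have "(\<Sum>i\<in>F. Bker \<nu> DpH Dw \<rho> h r k i j)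
        = E / (2 * d) * (\<Sum>i\<in>F. diffusion_sum \<nu> \<rho> h r i (char_foot \<nu> DpH Dw \<rho> h r k j))
          + (1 - E) / lam * (\<Sum>i\<in>F. jump_integral \<nu> \<rho> r i (gridpt \<rho> j))"
      unfolding Bker_eq by (simp add: sum.distrib sum_distrib_left E_def lam_def d_def)
    also have "\<dots> \<le> E / (2 * d) * (2 * d) + (1 - E) / lam * lam"
      using sum_diffusion_sum_le[OF \<open>\<rho> > 0\<close> that] sum_jump_integral_le[OF sets fin \<open>\<rho> > 0\<close> that] E d lam
      by (intro add_mono mult_left_mono) (auto simp: d_def lam_def)
    also have "\<dots> \<le> 1"
      using E d by (cases "lam = 0") auto
    finally show ?thesis .
  qed
  moreover have "0 \<le> Bker \<nu> DpH Dw \<rho> h r k i j" for i j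
    using E lam unfolding Bker_eq E_def lam_def
    by (intro add_nonneg_nonneg mult_nonneg_nonneg divide_nonneg_nonneg diffusion_sum_nonneg
        jump_integral_nonneg) auto
  ultimately show ?thesis
    by (simp add: substochastic_def)
qed

text \<open>The jump parts of the two kernels coincide, so only the diffusion part, evaluated at
  characteristic feet at distance \<open>h |\<Delta>D\<^sub>pH|\<close>, contributes.\<close>

lemma sum_abs_Bker_diff_le:
  fixes \<nu> :: "(real^'n) measure"
  assumes "\<rho> > 0" and "0 \<le> h" and "finite F"
  shows "(\<Sum>i\<in>F. \<bar>Bker \<nu> DpH Dw1 \<rho> h r k i j - Bker \<nu> DpH Dw2 \<rho> h r k i j\<bar>)
    \<le> exp (- h * jump_rate \<nu> r) * hat_lip_const CARD('n) * h *
       norm (DpH (gridpt \<rho> j) (Dw1 (real k * h) (gridpt \<rho> j))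
           - DpH (gridpt \<rho> j) (Dw2 (real k * h) (gridpt \<rho> j))) / \<rho>"
proof -
  define E where "E = exp (- h * jump_rate \<nu> r)"
  define d where "d = real CARD('n)"
  define c1 where "c1 = char_foot \<nu> DpH Dw1 \<rho> h r k j"
  define c2 where "c2 = char_foot \<nu> DpH Dw2 \<rho> h r k j"
  define \<Delta> where "\<Delta> = DpH (gridpt \<rho> j) (Dw1 (real k * h) (gridpt \<rho> j))
                     - DpH (gridpt \<rho> j) (Dw2 (real k * h) (gridpt \<rho> j))"
  have E: "0 < E" and d: "d > 0"
    by (simp_all add: E_def d_def)
  have "c1 - c2 = - (h *\<^sub>R \<Delta>)"
    unfolding c1_def c2_def char_foot_def \<Delta>_def by (simp add: algebra_simps)
  hence c12: "norm (c1 - c2) = h * norm \<Delta>"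
    using \<open>0 \<le> h\<close> by simp
  have "Bker \<nu> DpH Dw1 \<rho> h r k i j - Bker \<nu> DpH Dw2 \<rho> h r k i j
      = E / (2 * d) * (diffusion_sum \<nu> \<rho> h r i c1 - diffusion_sum \<nu> \<rho> h r i c2)" for i
    unfolding Bker_eq E_def d_def c1_def c2_def by (simp add: algebra_simps)
  hence "(\<Sum>i\<in>F. \<bar>Bker \<nu> DpH Dw1 \<rho> h r k i j - Bker \<nu> DpH Dw2 \<rho> h r k i j\<bar>)
      = E / (2 * d) * (\<Sum>i\<in>F. \<bar>diffusion_sum \<nu> \<rho> h r i c1 - diffusion_sum \<nu> \<rho> h r i c2\<bar>)"
    using E d by (simp add: abs_mult sum_distrib_left)
  also have "\<dots> \<le> E / (2 * d) * (2 * d * (hat_lip_const CARD('n) * norm (c1 - c2) / \<rho>))"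
    using sum_abs_diffusion_sum_diff_le[OF \<open>\<rho> > 0\<close> \<open>finite F\<close>] E d
    by (intro mult_left_mono) (auto simp: d_def)
  also have "\<dots> = E * hat_lip_const CARD('n) * h * norm \<Delta> / \<rho>"
    using d by (simp add: c12 field_simps)
  finally show ?thesis
    unfolding E_def \<Delta>_def .
qed

section \<open>Grid cells\<close>

lemma cell_eq_box:
  "cell \<rho> i = box (\<chi> l. \<rho> * of_int (i $ l) - \<rho> / 2) (\<chi> l. \<rho> * of_int (i $ l) + \<rho> / 2)"
proof -
  have abs_less: "\<bar>y - c\<bar> < e \<longleftrightarrow> c - e < y \<and> y < c + e" for y c e :: real
    by (auto simp: abs_less_iff)
  show ?thesis
    unfolding cell_def set_eq_iff mem_box_cart
    by (simp only: mem_Collect_eq vec_lambda_beta gridpt_nth abs_less simp_thms)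
qed

lemma open_cell: "open (cell \<rho> i)"
  unfolding cell_eq_box by (rule open_box)

lemma cell_disjoint:
  assumes "\<rho> > 0" and "x \<in> cell \<rho> i" and "x \<in> cell \<rho> i'"
  shows "i = i'"
proof (subst vec_eq_iff, intro allI)
  fix l
  have "\<bar>x $ l - \<rho> * of_int (i $ l)\<bar> < \<rho> / 2" "\<bar>x $ l - \<rho> * of_int (i' $ l)\<bar> < \<rho> / 2"
    using assms(2,3) by (auto simp: cell_def)
  hence "\<bar>\<rho> * (of_int (i $ l) - of_int (i' $ l))\<bar> < \<rho>"
    by (simp add: algebra_simps abs_if split: if_splits)
  hence "\<rho> * \<bar>of_int (i $ l) - of_int (i' $ l)\<bar> < \<rho> * 1"
    using assms(1) by (simp add: abs_mult)
  hence "\<bar>of_int (i $ l) - of_int (i' $ l)\<bar> < (1::real)"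
    using assms(1) by (simp only: mult_less_cancel_left_pos)
  thus "i $ l = i' $ l"
    by linarith
qed

lemma emeasure_cell:
  assumes "\<rho> > 0"
  shows "emeasure lborel (cell \<rho> (i::int^'n)) = ennreal (\<rho> ^ CARD('n))"
proof -
  define a :: "real^'n" where "a = (\<chi> l. \<rho> * of_int (i $ l) - \<rho> / 2)"
  define b :: "real^'n" where "b = (\<chi> l. \<rho> * of_int (i $ l) + \<rho> / 2)"
  have width: "b \<bullet> v - a \<bullet> v = \<rho>" if "v \<in> Basis" for v
    using that by (auto simp: Basis_vec_def a_def b_def inner_axis)
  have "emeasure lborel (cell \<rho> i) = ennreal (\<Prod>v\<in>Basis. (b - a) \<bullet> v)"
    unfolding cell_eq_box a_def[symmetric] b_def[symmetric]
    by (rule emeasure_lborel_box) (use width assms in force)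
  also have "\<dots> = ennreal (\<Prod>v\<in>(Basis::(real^'n) set). \<rho>)"
    by (simp add: width inner_diff_left)
  finally show ?thesis
    by simp
qed

section \<open>Transport of masses\<close>

lemma nonneg_bounded_finite_sums:
  fixes f :: "'a \<Rightarrow> real"
  assumes "\<And>i. 0 \<le> f i" and "\<And>F. finite F \<Longrightarrow> sum f F \<le> B"
  shows "f summable_on UNIV" and "(\<Sum>\<^sub>\<infinity>i. f i) \<le> B"
proof -
  show summable: "f summable_on UNIV"
    by (rule nonneg_bdd_above_summable_on) (use assms in \<open>auto intro!: bdd_aboveI2\<close>)
  show "(\<Sum>\<^sub>\<infinity>i. f i) \<le> B"
    by (rule infsum_le_finite_sums[OF summable]) (use assms in auto)
qed

lemma summable_on_diff:
  fixes f g :: "'a \<Rightarrow> 'b::{topological_ab_group_add, t2_space}"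
  assumes "f summable_on A" and "g summable_on A"
  shows "(\<lambda>x. f x - g x) summable_on A"
  using summable_on_add[OF assms(1), of "\<lambda>x. - g x"] assms(2) by (simp add: summable_on_uminus)

lemma infsum_diff:
  fixes f g :: "'a \<Rightarrow> 'b::{topological_ab_group_add, t2_space}"
  assumes "f summable_on A" and "g summable_on A"
  shows "infsum (\<lambda>x. f x - g x) A = infsum f A - infsum g A"
  using infsum_add[OF assms(1), of "\<lambda>x. - g x"] assms(2) by (simp add: summable_on_uminus infsum_uminus)

lemma summable_on_abs_diff:
  fixes f g :: "'a \<Rightarrow> real"
  assumes "f summable_on A" and "g summable_on A"
  shows "(\<lambda>x. \<bar>f x - g x\<bar>) summable_on A"
  using summable_on_iff_abs_summable_on_real[THEN iffD1, OF summable_on_diff[OF assms]] by simp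

lemma abs_infsum_le:
  fixes u w :: "'a \<Rightarrow> real"
  assumes "u summable_on A" and "w summable_on A" and "\<And>x. x \<in> A \<Longrightarrow> \<bar>u x\<bar> \<le> w x"
  shows "\<bar>infsum u A\<bar> \<le> infsum w A"
proof -
  have abs_u: "(\<lambda>x. \<bar>u x\<bar>) summable_on A"
    using summable_on_iff_abs_summable_on_real[THEN iffD1, OF assms(1)] by simp
  have "\<bar>infsum u A\<bar> \<le> infsum (\<lambda>x. \<bar>u x\<bar>) A"
    using norm_infsum_bound[of u A] abs_u by simp
  also have "\<dots> \<le> infsum w A"
    by (rule infsum_mono[OF abs_u assms(2)]) (rule assms(3))
  finally show ?thesis .
qed

lemma summable_infsum_finite_sum:
  fixes f :: "'i \<Rightarrow> 'j \<Rightarrow> real"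
  assumes "finite F" and "\<And>i. i \<in> F \<Longrightarrow> f i summable_on A"
  shows "(\<lambda>j. \<Sum>i\<in>F. f i j) summable_on A \<and> infsum (\<lambda>j. \<Sum>i\<in>F. f i j) A = (\<Sum>i\<in>F. infsum (f i) A)"
  using assms
proof (induction F rule: finite_induct)
  case (insert x F)
  thus ?case
    by (simp add: summable_on_add infsum_add)
qed simp

definition subprob_weights :: "('i \<Rightarrow> real) \<Rightarrow> bool" where
  "subprob_weights m \<longleftrightarrow> (\<forall>i. 0 \<le> m i) \<and> m summable_on UNIV \<and> (\<Sum>\<^sub>\<infinity>i. m i) \<le> 1"

definition kernel_push :: "('j \<Rightarrow> real) \<Rightarrow> ('i \<Rightarrow> 'j \<Rightarrow> real) \<Rightarrow> 'i \<Rightarrow> real" where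
  "kernel_push m B i = (\<Sum>\<^sub>\<infinity>j. m j * B i j)"

lemma summable_on_mult_substochastic:
  assumes "substochastic B" and "subprob_weights m"
  shows "(\<lambda>j. m j * B i j) summable_on UNIV"
proof (rule summable_on_comparison_test[of m])
  show "m summable_on UNIV" and "0 \<le> m j * B i j" and "m j * B i j \<le> m j" for j
    using assms substochastic_le_one[OF assms(1), of i j]
    by (simp_all add: substochastic_def subprob_weights_def mult_left_le)
qed

lemma subprob_weights_kernel_push:
  assumes B: "substochastic B" and m: "subprob_weights m"
  shows "subprob_weights (kernel_push m B)"
proof -
  note terms = summable_on_mult_substochastic[OF B m]
  have nonneg: "0 \<le> kernel_push m B i" for i
    using B m unfolding kernel_push_def substochastic_def subprob_weights_def
    by (intro infsum_nonneg) simp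
  have "sum (kernel_push m B) F \<le> 1" if "finite F" for F
  proof -
    have "sum (kernel_push m B) F = (\<Sum>\<^sub>\<infinity>j. \<Sum>i\<in>F. m j * B i j)"
      using summable_infsum_finite_sum[OF that, where f = "\<lambda>i j. m j * B i j", OF terms] by (simp add: kernel_push_def)
    also have "\<dots> \<le> (\<Sum>\<^sub>\<infinity>j. m j)"
    proof (rule infsum_mono)
      show "(\<lambda>j. \<Sum>i\<in>F. m j * B i j) summable_on UNIV"
        using summable_infsum_finite_sum[OF that, where f = "\<lambda>i j. m j * B i j", OF terms] by blast
      fix j
      have "m j * (\<Sum>i\<in>F. B i j) \<le> m j * 1"
        using B m that by (intro mult_left_mono) (auto simp: substochastic_def subprob_weights_def)
      thus "(\<Sum>i\<in>F. m j * B i j) \<le> m j"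
        by (simp add: sum_distrib_left)
    qed (use m in \<open>simp add: subprob_weights_def\<close>)
    also have "\<dots> \<le> 1"
      using m by (simp add: subprob_weights_def)
    finally show ?thesis .
  qed
  thus ?thesis
    using nonneg_bounded_finite_sums[of "kernel_push m B" 1] nonneg
    by (simp add: subprob_weights_def)
qed

definition push_diff_majorant :: "('j \<Rightarrow> real) \<Rightarrow> ('i \<Rightarrow> 'j \<Rightarrow> real) \<Rightarrow> ('j \<Rightarrow> real) \<Rightarrow> ('i \<Rightarrow> 'j \<Rightarrow> real) \<Rightarrow> 'i \<Rightarrow> 'j \<Rightarrow> real" where
  "push_diff_majorant m1 B1 m2 B2 i j = \<bar>m1 j - m2 j\<bar> * B1 i j + m2 j * \<bar>B1 i j - B2 i j\<bar>"

lemma summable_on_push_diff_majorant: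
  assumes B1: "substochastic B1" and B2: "substochastic B2"
    and m1: "subprob_weights m1" and m2: "subprob_weights m2"
  shows "push_diff_majorant m1 B1 m2 B2 i summable_on UNIV"
proof -
  have B_01: "0 \<le> B1 i j" "B1 i j \<le> 1" "0 \<le> B2 i j" "B2 i j \<le> 1" for j
    using B1 B2 substochastic_le_one[OF B1] substochastic_le_one[OF B2]
    unfolding substochastic_def by auto
  have D: "(\<lambda>j. \<bar>m1 j - m2 j\<bar>) summable_on UNIV"
    using m1 m2 unfolding subprob_weights_def by (intro summable_on_abs_diff) auto
  have "(\<lambda>j. \<bar>m1 j - m2 j\<bar> * B1 i j) summable_on UNIV"
  proof (rule summable_on_comparison_test[OF D])
    show "0 \<le> \<bar>m1 j - m2 j\<bar> * B1 i j" and "\<bar>m1 j - m2 j\<bar> * B1 i j \<le> \<bar>m1 j - m2 j\<bar>" for j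
      using B_01[of j] by (simp_all add: mult_left_le)
  qed
  moreover have "(\<lambda>j. m2 j * \<bar>B1 i j - B2 i j\<bar>) summable_on UNIV"
  proof (rule summable_on_comparison_test[of m2])
    show "m2 summable_on UNIV"
      using m2 by (simp add: subprob_weights_def)
    fix j
    have "0 \<le> m2 j" and "\<bar>B1 i j - B2 i j\<bar> \<le> 1"
      using m2 B_01[of j] by (auto simp: subprob_weights_def abs_le_iff)
    thus "0 \<le> m2 j * \<bar>B1 i j - B2 i j\<bar>" and "m2 j * \<bar>B1 i j - B2 i j\<bar> \<le> m2 j"
      by (simp_all add: mult_left_le)
  qed
  ultimately show ?thesis
    unfolding push_diff_majorant_def by (rule summable_on_add)
qed

lemma abs_kernel_push_diff_le:
  assumes B1: "substochastic B1" and B2: "substochastic B2"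
    and m1: "subprob_weights m1" and m2: "subprob_weights m2"
  shows "\<bar>kernel_push m1 B1 i - kernel_push m2 B2 i\<bar> \<le> (\<Sum>\<^sub>\<infinity>j. push_diff_majorant m1 B1 m2 B2 i j)"
proof -
  have terms: "(\<lambda>j. m1 j * B1 i j) summable_on UNIV" "(\<lambda>j. m2 j * B2 i j) summable_on UNIV"
    by (intro summable_on_mult_substochastic B1 B2 m1 m2)+
  have "kernel_push m1 B1 i - kernel_push m2 B2 i = (\<Sum>\<^sub>\<infinity>j. m1 j * B1 i j - m2 j * B2 i j)"
    unfolding kernel_push_def by (rule infsum_diff[symmetric]) (fact terms)+
  also have "\<bar>\<dots>\<bar> \<le> (\<Sum>\<^sub>\<infinity>j. push_diff_majorant m1 B1 m2 B2 i j)"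
  proof (rule abs_infsum_le[OF summable_on_diff[OF terms] summable_on_push_diff_majorant[OF assms]])
    fix j
    have "\<bar>m1 j * B1 i j - m2 j * B2 i j\<bar> = \<bar>(m1 j - m2 j) * B1 i j + m2 j * (B1 i j - B2 i j)\<bar>"
      by (simp add: algebra_simps)
    also have "\<dots> \<le> \<bar>(m1 j - m2 j) * B1 i j\<bar> + \<bar>m2 j * (B1 i j - B2 i j)\<bar>"
      by (rule abs_triangle_ineq)
    also have "\<dots> = push_diff_majorant m1 B1 m2 B2 i j"
      using B1 m2 by (simp add: push_diff_majorant_def abs_mult substochastic_def subprob_weights_def)
    finally show "\<bar>m1 j * B1 i j - m2 j * B2 i j\<bar> \<le> push_diff_majorant m1 B1 m2 B2 i j" .
  qed
  finally show ?thesis .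
qed

lemma infsum_abs_kernel_push_diff_le:
  assumes B1: "substochastic B1" and B2: "substochastic B2"
    and m1: "subprob_weights m1" and m2: "subprob_weights m2"
    and close: "\<And>F j. finite F \<Longrightarrow> (\<Sum>i\<in>F. \<bar>B1 i j - B2 i j\<bar>) \<le> C"
  shows "(\<Sum>\<^sub>\<infinity>i. \<bar>kernel_push m1 B1 i - kernel_push m2 B2 i\<bar>) \<le> (\<Sum>\<^sub>\<infinity>j. \<bar>m1 j - m2 j\<bar>) + C"
proof -
  define D where "D j = \<bar>m1 j - m2 j\<bar>" for j
  define w where "w = push_diff_majorant m1 B1 m2 B2"
  have w: "w i summable_on UNIV" for i
    unfolding w_def by (rule summable_on_push_diff_majorant[OF assms(1-4)])
  have D: "D summable_on UNIV"
    using m1 m2 unfolding D_def subprob_weights_def by (intro summable_on_abs_diff) auto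
  have m2_nonneg: "0 \<le> m2 j" and m2_summable: "m2 summable_on UNIV" for j
    using m2 by (auto simp: subprob_weights_def)
  have "(\<Sum>i\<in>F. \<bar>kernel_push m1 B1 i - kernel_push m2 B2 i\<bar>) \<le> (\<Sum>\<^sub>\<infinity>j. D j) + C"
    if F: "finite F" for F
  proof -
    have "C \<ge> 0"
      using close[of "{}"] by simp
    have "(\<Sum>i\<in>F. \<bar>kernel_push m1 B1 i - kernel_push m2 B2 i\<bar>) \<le> (\<Sum>i\<in>F. \<Sum>\<^sub>\<infinity>j. w i j)"
      unfolding w_def by (intro sum_mono abs_kernel_push_diff_le assms(1-4))
    also have "\<dots> = (\<Sum>\<^sub>\<infinity>j. \<Sum>i\<in>F. w i j)"
      using summable_infsum_finite_sum[OF F, where f = w, OF w] by simp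
    also have "\<dots> \<le> (\<Sum>\<^sub>\<infinity>j. D j + m2 j * C)"
    proof (rule infsum_mono)
      show "(\<lambda>j. \<Sum>i\<in>F. w i j) summable_on UNIV"
        using summable_infsum_finite_sum[OF F, where f = w, OF w] by blast
      show "(\<lambda>j. D j + m2 j * C) summable_on UNIV"
        by (intro summable_on_add summable_on_cmult_left D m2_summable)
      fix j
      have "(\<Sum>i\<in>F. w i j) = D j * (\<Sum>i\<in>F. B1 i j) + m2 j * (\<Sum>i\<in>F. \<bar>B1 i j - B2 i j\<bar>)"
        by (simp add: w_def D_def push_diff_majorant_def sum.distrib sum_distrib_left)
      also have "\<dots> \<le> D j * 1 + m2 j * C"
        using B1 F close[OF F] m2_nonneg
        by (intro add_mono mult_left_mono) (auto simp: D_def substochastic_def)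
      finally show "(\<Sum>i\<in>F. w i j) \<le> D j + m2 j * C"
        by simp
    qed
    also have "\<dots> = (\<Sum>\<^sub>\<infinity>j. D j) + (\<Sum>\<^sub>\<infinity>j. m2 j) * C"
      using D m2_summable by (simp add: infsum_add summable_on_cmult_left infsum_cmult_left)
    also have "\<dots> \<le> (\<Sum>\<^sub>\<infinity>j. D j) + C"
      using m2 \<open>C \<ge> 0\<close> by (simp add: subprob_weights_def mult_left_le_one_le infsum_nonneg)
    finally show ?thesis .
  qed
  thus ?thesis
    using nonneg_bounded_finite_sums(2)[of "\<lambda>i. \<bar>kernel_push m1 B1 i - kernel_push m2 B2 i\<bar>"]
    by (simp add: D_def)
qed

lemma fpk_mass_Suc_eq_kernel_push:
  "fpk_mass \<nu> DpH Dw \<rho> h r m0 (Suc k) = kernel_push (fpk_mass \<nu> DpH Dw \<rho> h r m0 k) (Bker \<nu> DpH Dw \<rho> h r k)"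
  by (simp add: fun_eq_iff kernel_push_def)

lemma subprob_weights_measure_cells:
  fixes m0 :: "(real^'n) measure"
  assumes "prob_space m0" and "sets m0 = sets borel" and "\<rho> > 0"
  shows "subprob_weights (\<lambda>i. measure m0 (cell \<rho> i))"
proof -
  interpret prob_space m0
    by (rule assms(1))
  have "(\<Sum>i\<in>F. measure m0 (cell \<rho> i)) \<le> 1" if "finite F" for F
  proof -
    have "disjoint_family_on (cell \<rho>) F"
      using cell_disjoint[OF assms(3)] unfolding disjoint_family_on_def by blast
    hence "(\<Sum>i\<in>F. measure m0 (cell \<rho> i)) = measure m0 (\<Union>i\<in>F. cell \<rho> i)"
      using assms(2) borel_open[OF open_cell]
      by (intro measure_finite_Union[symmetric] that) auto
    thus ?thesis
      by simp
  qed
  thus ?thesis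
    using nonneg_bounded_finite_sums[of "\<lambda>i. measure m0 (cell \<rho> i)" 1]
    by (simp add: subprob_weights_def)
qed

lemma subprob_weights_fpk_mass:
  fixes \<nu> m0 :: "(real^'n) measure"
  assumes "sets \<nu> = sets borel" and "emeasure \<nu> {z. r < norm z} < \<infinity>"
    and "prob_space m0" and "sets m0 = sets borel" and "\<rho> > 0" and "0 \<le> h"
  shows "subprob_weights (fpk_mass \<nu> DpH Dw \<rho> h r m0 k)"
proof (induction k)
  case 0
  show ?case
    using subprob_weights_measure_cells[OF assms(3-5)] by simp
next
  case (Suc k)
  thus ?case
    unfolding fpk_mass_Suc_eq_kernel_push
    by (intro subprob_weights_kernel_push substochastic_Bker assms(1,2,5,6))
qed

lemma infsum_abs_fpk_mass_diff_le:
  fixes \<nu> m0 :: "(real^'n) measure"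
  assumes sets: "sets \<nu> = sets borel" and fin: "emeasure \<nu> {z. r < norm z} < \<infinity>"
    and m0: "prob_space m0" "sets m0 = sets borel" and "\<rho> > 0" and "0 \<le> h"
    and close: "\<And>k' j. k' < k \<Longrightarrow> norm (DpH (gridpt \<rho> j) (Dw1 (real k' * h) (gridpt \<rho> j))
                                     - DpH (gridpt \<rho> j) (Dw2 (real k' * h) (gridpt \<rho> j))) \<le> M"
  shows "(\<Sum>\<^sub>\<infinity>i. \<bar>fpk_mass \<nu> DpH Dw1 \<rho> h r m0 k i - fpk_mass \<nu> DpH Dw2 \<rho> h r m0 k i\<bar>)
           \<le> real k * (exp (- h * jump_rate \<nu> r) * hat_lip_const CARD('n) * h * M / \<rho>)"
  using close
proof (induction k)
  case 0
  thus ?case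
    by simp
next
  case (Suc k)
  define C where "C = exp (- h * jump_rate \<nu> r) * hat_lip_const CARD('n) * h * M / \<rho>"
  have "(\<Sum>i\<in>F. \<bar>Bker \<nu> DpH Dw1 \<rho> h r k i j - Bker \<nu> DpH Dw2 \<rho> h r k i j\<bar>) \<le> C"
    if "finite F" for F j
  proof -
    have "exp (- h * jump_rate \<nu> r) * hat_lip_const CARD('n) * h \<ge> 0"
      using hat_lip_const_pos[of "CARD('n)"] \<open>0 \<le> h\<close> by simp
    hence "exp (- h * jump_rate \<nu> r) * hat_lip_const CARD('n) * h *
        norm (DpH (gridpt \<rho> j) (Dw1 (real k * h) (gridpt \<rho> j))
            - DpH (gridpt \<rho> j) (Dw2 (real k * h) (gridpt \<rho> j))) / \<rho> \<le> C"
      unfolding C_def using Suc.prems[of k j] \<open>\<rho> > 0\<close>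
      by (intro divide_right_mono mult_left_mono) auto
    thus ?thesis
      using sum_abs_Bker_diff_le[OF \<open>\<rho> > 0\<close> \<open>0 \<le> h\<close> that, of \<nu> DpH Dw1 r k j Dw2] by linarith
  qed
  hence "(\<Sum>\<^sub>\<infinity>i. \<bar>fpk_mass \<nu> DpH Dw1 \<rho> h r m0 (Suc k) i - fpk_mass \<nu> DpH Dw2 \<rho> h r m0 (Suc k) i\<bar>)
      \<le> (\<Sum>\<^sub>\<infinity>i. \<bar>fpk_mass \<nu> DpH Dw1 \<rho> h r m0 k i - fpk_mass \<nu> DpH Dw2 \<rho> h r m0 k i\<bar>) + C"
    unfolding fpk_mass_Suc_eq_kernel_push
    by (intro infsum_abs_kernel_push_diff_le substochastic_Bker subprob_weights_fpk_mass
        sets fin m0 \<open>\<rho> > 0\<close> \<open>0 \<le> h\<close>)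
  also have "\<dots> \<le> real k * C + C"
    using Suc by (simp add: C_def)
  also have "\<dots> = real (Suc k) * C"
    by (simp add: algebra_simps)
  finally show ?case
    unfolding C_def .
qed

section \<open>Densities\<close>

lemma infsum_indicator_cell:
  fixes a :: "int^'n \<Rightarrow> real"
  assumes "\<rho> > 0" and "x \<in> cell \<rho> i"
  shows "(\<Sum>\<^sub>\<infinity>i'. a i' * indicator (cell \<rho> i') x) = a i"
proof -
  have "(\<Sum>\<^sub>\<infinity>i'. a i' * indicator (cell \<rho> i') x) = (\<Sum>\<^sub>\<infinity>i'\<in>{i}. a i' * indicator (cell \<rho> i') x)"
    by (rule infsum_cong_neutral) (use cell_disjoint[OF assms] in \<open>auto simp: indicator_def\<close>)
  thus ?thesis
    using assms(2) by simp
qed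

lemma fpk_dens_k_on_cell:
  fixes i :: "int^'n"
  assumes "\<rho> > 0" and "x \<in> cell \<rho> i"
  shows "fpk_dens_k \<nu> DpH Dw \<rho> h r m0 k x = fpk_mass \<nu> DpH Dw \<rho> h r m0 k i / \<rho> ^ CARD('n)"
  unfolding fpk_dens_k_def by (simp only: infsum_indicator_cell[OF assms])

lemma fpk_dens_k_off_cells:
  assumes "\<And>i. x \<notin> cell \<rho> i"
  shows "fpk_dens_k \<nu> DpH Dw \<rho> h r m0 k x = 0"
  using assms by (simp add: fpk_dens_k_def)

lemma nn_integral_count_space_eq_infsum:
  fixes g :: "'a \<Rightarrow> real"
  assumes "\<And>i. 0 \<le> g i" and "g summable_on UNIV"
  shows "(\<integral>\<^sup>+i. ennreal (g i) \<partial>count_space UNIV) = ennreal (\<Sum>\<^sub>\<infinity>i. g i)"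
proof -
  have abs_summable: "Infinite_Set_Sum.abs_summable_on g UNIV"
    using abs_summable_equivalent[of g UNIV] assms by simp
  hence "(\<integral>\<^sup>+i. ennreal (g i) \<partial>count_space UNIV) = ennreal (infsetsum g UNIV)"
    by (rule nn_integral_conv_infsetsum) (simp add: assms(1))
  thus ?thesis
    using infsetsum_infsum[OF abs_summable] by simp
qed

lemma nn_integral_abs_le_cellwise:
  fixes F :: "real^'n \<Rightarrow> real" and g :: "int^'n \<Rightarrow> real"
  assumes "\<rho> > 0" and g_nonneg: "\<And>i. 0 \<le> g i" and "g summable_on UNIV"
    and on_cell: "\<And>x i. x \<in> cell \<rho> i \<Longrightarrow> \<bar>F x\<bar> \<le> g i / \<rho> ^ CARD('n)"
    and off_cells: "\<And>x. (\<And>i. x \<notin> cell \<rho> i) \<Longrightarrow> F x = 0"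
  shows "(\<integral>\<^sup>+x. ennreal \<bar>F x\<bar> \<partial>lborel) \<le> ennreal (\<Sum>\<^sub>\<infinity>i. g i)"
proof -
  define d where "d = (\<rho> ^ CARD('n) :: real)"
  have "d > 0"
    using \<open>\<rho> > 0\<close> by (simp add: d_def)
  have cell_borel: "cell \<rho> i \<in> sets borel" for i
    by (rule borel_open[OF open_cell])
  have pointwise: "ennreal \<bar>F x\<bar> \<le> (\<integral>\<^sup>+i. ennreal (g i / d) * indicator (cell \<rho> i) x \<partial>count_space UNIV)" for x
  proof (cases "\<exists>i. x \<in> cell \<rho> i")
    case True
    then obtain i0 where x: "x \<in> cell \<rho> i0"
      by blast
    have "(\<integral>\<^sup>+i. ennreal (g i / d) * indicator (cell \<rho> i) x \<partial>count_space UNIV)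
        = (\<integral>\<^sup>+i. ennreal (g i0 / d) * indicator {i0} i \<partial>count_space UNIV)"
    proof (rule nn_integral_cong)
      fix i
      show "ennreal (g i / d) * indicator (cell \<rho> i) x = ennreal (g i0 / d) * indicator {i0} i"
        using x cell_disjoint[OF \<open>\<rho> > 0\<close> x, of i] by (cases "i = i0") (auto simp: indicator_def)
    qed
    also have "\<dots> = ennreal (g i0 / d)"
      by (simp add: nn_integral_cmult_indicator)
    finally show ?thesis
      using on_cell[OF x] by (simp add: d_def)
  next
    case False
    thus ?thesis
      using off_cells[of x] by simp
  qed
  have "(\<integral>\<^sup>+x. ennreal \<bar>F x\<bar> \<partial>lborel)
      \<le> (\<integral>\<^sup>+x. (\<integral>\<^sup>+i. ennreal (g i / d) * indicator (cell \<rho> i) x \<partial>count_space UNIV) \<partial>lborel)"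
    by (intro nn_integral_mono pointwise)
  also have "\<dots> = (\<integral>\<^sup>+i. (\<integral>\<^sup>+x. ennreal (g i / d) * indicator (cell \<rho> i) x \<partial>lborel) \<partial>count_space UNIV)"
  proof (rule nn_integral_count_space_nn_integral)
    show "(\<lambda>x. ennreal (g i / d) * indicator (cell \<rho> i) x) \<in> borel_measurable lborel" for i
      using cell_borel[of i] by measurable
  qed simp
  also have "\<dots> = (\<integral>\<^sup>+i. ennreal (g i) \<partial>count_space UNIV)"
  proof (rule nn_integral_cong)
    fix i :: "int^'n"
    have "(\<integral>\<^sup>+x. ennreal (g i / d) * indicator (cell \<rho> i) x \<partial>lborel)
        = ennreal (g i / d) * emeasure lborel (cell \<rho> i)"
      by (rule nn_integral_cmult_indicator) (simp add: cell_borel)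
    also have "\<dots> = ennreal (g i / d) * ennreal d"
      by (simp add: emeasure_cell[OF \<open>\<rho> > 0\<close>] d_def)
    also have "\<dots> = ennreal (g i / d * d)"
      using \<open>d > 0\<close> g_nonneg[of i] by (intro ennreal_mult[symmetric]) auto
    also have "\<dots> = ennreal (g i)"
      using \<open>d > 0\<close> by simp
    finally show "(\<integral>\<^sup>+x. ennreal (g i / d) * indicator (cell \<rho> i) x \<partial>lborel) = ennreal (g i)" .
  qed
  also have "\<dots> = ennreal (\<Sum>\<^sub>\<infinity>i. g i)"
    using g_nonneg \<open>g summable_on UNIV\<close> by (rule nn_integral_count_space_eq_infsum)
  finally show ?thesis .
qed

lemma nn_integral_abs_fpk_dens_diff_le_interpolation:
  fixes \<nu> m0 :: "(real^'n) measure"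
  assumes sets: "sets \<nu> = sets borel" and fin: "emeasure \<nu> {z. r < norm z} < \<infinity>"
    and m0: "prob_space m0" "sets m0 = sets borel" and "\<rho> > 0" and "0 \<le> h"
    and k: "k = nat \<lfloor>t / h\<rfloor>" and s: "s = t / h - real k" "0 \<le> s" "s \<le> 1"
  shows "(\<integral>\<^sup>+ x. ennreal \<bar>fpk_dens \<nu> DpH Dw1 \<rho> h r m0 t x - fpk_dens \<nu> DpH Dw2 \<rho> h r m0 t x\<bar> \<partial>lborel)
    \<le> ennreal ((1 - s) * (\<Sum>\<^sub>\<infinity>i. \<bar>fpk_mass \<nu> DpH Dw1 \<rho> h r m0 k i - fpk_mass \<nu> DpH Dw2 \<rho> h r m0 k i\<bar>)
               + s * (\<Sum>\<^sub>\<infinity>i. \<bar>fpk_mass \<nu> DpH Dw1 \<rho> h r m0 (Suc k) i - fpk_mass \<nu> DpH Dw2 \<rho> h r m0 (Suc k) i\<bar>))"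
proof -
  define D where "D k i = \<bar>fpk_mass \<nu> DpH Dw1 \<rho> h r m0 k i - fpk_mass \<nu> DpH Dw2 \<rho> h r m0 k i\<bar>" for k i
  have D_summable: "D k summable_on UNIV" for k
    using subprob_weights_fpk_mass[OF sets fin m0 \<open>\<rho> > 0\<close> \<open>0 \<le> h\<close>, of DpH _ k]
    unfolding D_def subprob_weights_def by (intro summable_on_abs_diff) auto
  define g where "g i = (1 - s) * D k i + s * D (Suc k) i" for i
  have dens: "fpk_dens \<nu> DpH Dw \<rho> h r m0 t x
      = (1 - s) * fpk_dens_k \<nu> DpH Dw \<rho> h r m0 k x + s * fpk_dens_k \<nu> DpH Dw \<rho> h r m0 (Suc k) x" for Dw x
    unfolding fpk_dens_def Let_def k s(1) ..
  have "(\<integral>\<^sup>+ x. ennreal \<bar>fpk_dens \<nu> DpH Dw1 \<rho> h r m0 t x - fpk_dens \<nu> DpH Dw2 \<rho> h r m0 t x\<bar> \<partial>lborel)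
      \<le> ennreal (\<Sum>\<^sub>\<infinity>i. g i)"
  proof (rule nn_integral_abs_le_cellwise[OF \<open>\<rho> > 0\<close>])
    show "0 \<le> g i" for i
      using s by (simp add: g_def D_def)
    show "g summable_on UNIV"
      unfolding g_def by (intro summable_on_add summable_on_cmult_right D_summable)
    show "\<bar>fpk_dens \<nu> DpH Dw1 \<rho> h r m0 t x - fpk_dens \<nu> DpH Dw2 \<rho> h r m0 t x\<bar> \<le> g i / \<rho> ^ CARD('n)"
      if "x \<in> cell \<rho> i" for x i
    proof -
      define A where "A = fpk_mass \<nu> DpH Dw1 \<rho> h r m0 k i - fpk_mass \<nu> DpH Dw2 \<rho> h r m0 k i"
      define B where "B = fpk_mass \<nu> DpH Dw1 \<rho> h r m0 (Suc k) i - fpk_mass \<nu> DpH Dw2 \<rho> h r m0 (Suc k) i"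
      have "fpk_dens \<nu> DpH Dw1 \<rho> h r m0 t x - fpk_dens \<nu> DpH Dw2 \<rho> h r m0 t x
          = ((1 - s) * A + s * B) / \<rho> ^ CARD('n)"
        using fpk_dens_k_on_cell[OF \<open>\<rho> > 0\<close> that, of \<nu> DpH Dw1 h r m0]
          fpk_dens_k_on_cell[OF \<open>\<rho> > 0\<close> that, of \<nu> DpH Dw2 h r m0] \<open>\<rho> > 0\<close>
        by (simp only: dens) (simp add: A_def B_def field_simps del: fpk_mass.simps)
      moreover have "\<bar>(1 - s) * A + s * B\<bar> \<le> g i"
      proof -
        have "\<bar>1 - s\<bar> = 1 - s" "\<bar>s\<bar> = s"
          using s by auto
        thus ?thesis
          using abs_triangle_ineq[of "(1 - s) * A" "s * B"] by (simp add: g_def D_def A_def B_def abs_mult)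
      qed
      ultimately show ?thesis
        using \<open>\<rho> > 0\<close> by (simp add: abs_divide divide_right_mono)
    qed
    show "fpk_dens \<nu> DpH Dw1 \<rho> h r m0 t x - fpk_dens \<nu> DpH Dw2 \<rho> h r m0 t x = 0"
      if "\<And>i. x \<notin> cell \<rho> i" for x
      unfolding dens fpk_dens_k_off_cells[OF that] by simp
  qed
  also have "(\<Sum>\<^sub>\<infinity>i. g i) = (1 - s) * (\<Sum>\<^sub>\<infinity>i. D k i) + s * (\<Sum>\<^sub>\<infinity>i. D (Suc k) i)"
    unfolding g_def using D_summable
    by (simp add: infsum_add summable_on_cmult_right infsum_cmult_right)
  finally show ?thesis
    unfolding D_def .
qed

text \<open>At \<open>t = T\<close> the index \<open>k + 1 = N + 1\<close> lies beyond the horizon, but it enters with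
  weight \<open>s = 0\<close>.\<close>

lemma nn_integral_abs_fpk_dens_diff_le:
  fixes \<nu> m0 :: "(real^'n) measure"
  assumes sets: "sets \<nu> = sets borel" and fin: "emeasure \<nu> {z. r < norm z} < \<infinity>"
    and m0: "prob_space m0" "sets m0 = sets borel" and "\<rho> > 0" and "N > 0" and "T > 0"
    and close: "\<And>t x. t \<in> {0..T} \<Longrightarrow> norm (DpH x (Dw1 t x) - DpH x (Dw2 t x)) \<le> M"
    and t: "t \<in> {0..T}"
  shows "(\<integral>\<^sup>+ x. ennreal \<bar>fpk_dens \<nu> DpH Dw1 \<rho> (T / real N) r m0 t x
                         - fpk_dens \<nu> DpH Dw2 \<rho> (T / real N) r m0 t x\<bar> \<partial>lborel)
     \<le> ennreal (exp (- (T / real N) * jump_rate \<nu> r) * hat_lip_const CARD('n) * T * M / \<rho>)"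
proof -
  define h where "h = T / real N"
  have "h > 0" and "real N * h = T"
    using \<open>T > 0\<close> \<open>N > 0\<close> by (simp_all add: h_def)
  define bound where "bound = exp (- h * jump_rate \<nu> r) * hat_lip_const CARD('n) * T * M / \<rho>"
  have "0 \<le> M"
    using close[OF t] norm_ge_zero order_trans by blast
  define X where "X k = (\<Sum>\<^sub>\<infinity>i. \<bar>fpk_mass \<nu> DpH Dw1 \<rho> h r m0 k i - fpk_mass \<nu> DpH Dw2 \<rho> h r m0 k i\<bar>)" for k
  have mass_bound: "X k \<le> bound" if "k \<le> N" for k
  proof -
    have "real k' * h \<in> {0..T}" if "k' < k" for k'
      using \<open>k \<le> N\<close> that \<open>h > 0\<close> \<open>real N * h = T\<close> mult_right_mono[of "real k'" "real N" h] by simp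
    hence "X k \<le> real k * (exp (- h * jump_rate \<nu> r) * hat_lip_const CARD('n) * h * M / \<rho>)"
      unfolding X_def
      by (intro infsum_abs_fpk_mass_diff_le[OF sets fin m0 \<open>\<rho> > 0\<close>] close less_imp_le[OF \<open>h > 0\<close>]) auto
    also have "\<dots> \<le> real N * (exp (- h * jump_rate \<nu> r) * hat_lip_const CARD('n) * h * M / \<rho>)"
      using \<open>0 \<le> M\<close> hat_lip_const_pos[of "CARD('n)"] \<open>h > 0\<close> \<open>\<rho> > 0\<close> \<open>k \<le> N\<close>
      by (intro mult_right_mono) (auto intro!: divide_nonneg_pos mult_nonneg_nonneg)
    also have "\<dots> = bound"
      using \<open>real N * h = T\<close> by (simp add: bound_def field_simps)
    finally show ?thesis .
  qed
  define k where "k = nat \<lfloor>t / h\<rfloor>"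
  define s where "s = t / h - real k"
  have "0 \<le> t / h" and "t / h \<le> real N"
    using t \<open>h > 0\<close> \<open>real N * h = T\<close> by (auto simp: field_simps)
  hence k: "real k \<le> t / h" "t / h < real k + 1"
    unfolding k_def by linarith+
  hence s: "0 \<le> s" "s \<le> 1"
    by (auto simp: s_def)
  have "k \<le> N"
    using k \<open>t / h \<le> real N\<close> by linarith
  have "s * X (Suc k) \<le> s * bound"
  proof (cases "s = 0")
    case False
    hence "Suc k \<le> N"
      using s k \<open>t / h \<le> real N\<close> unfolding s_def by linarith
    thus ?thesis
      using mass_bound s by (intro mult_left_mono) auto
  qed simp
  moreover have "(1 - s) * X k \<le> (1 - s) * bound"
    using mass_bound[OF \<open>k \<le> N\<close>] s by (intro mult_left_mono) auto
  moreover have "(1 - s) * bound + s * bound = bound"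
    by (simp add: algebra_simps)
  ultimately have "(1 - s) * X k + s * X (Suc k) \<le> bound"
    by linarith
  hence "(\<integral>\<^sup>+ x. ennreal \<bar>fpk_dens \<nu> DpH Dw1 \<rho> h r m0 t x - fpk_dens \<nu> DpH Dw2 \<rho> h r m0 t x\<bar> \<partial>lborel)
      \<le> ennreal bound"
    using nn_integral_abs_fpk_dens_diff_le_interpolation[OF sets fin m0 \<open>\<rho> > 0\<close>
        less_imp_le[OF \<open>h > 0\<close>] k_def s_def s, of DpH Dw1 Dw2]
    unfolding X_def by (meson ennreal_leI order_trans)
  thus ?thesis
    unfolding bound_def h_def .
qed

lemma sup_nn_integral_abs_fpk_dens_diff_le:
  fixes \<nu> m0 :: "(real^'n) measure" and DpH :: "real^'n \<Rightarrow> real^'n \<Rightarrow> real^'n"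
  assumes sets: "sets \<nu> = sets borel" and levy: "(\<integral>\<^sup>+ z. ennreal (min 1 (norm z ^ 2)) \<partial>\<nu>) < \<infinity>"
    and m0: "prob_space m0" "sets m0 = sets borel"
    and pos: "\<rho> > 0" "N > 0" "T > 0" and "r > 0"
  shows "(SUP t\<in>{0..T}. \<integral>\<^sup>+ x. ennreal \<bar>fpk_dens \<nu> DpH Dw1 \<rho> (T / real N) r m0 t x
                                 - fpk_dens \<nu> DpH Dw2 \<rho> (T / real N) r m0 t x\<bar> \<partial>lborel)
    \<le> ennreal (hat_lip_const CARD('n) * T / \<rho> * exp (- (T / real N) * jump_rate \<nu> r)) *
      (SUP t\<in>{0..T}. SUP x. ennreal (norm (DpH x (Dw1 t x) - DpH x (Dw2 t x))))"
proof -
  have fin: "emeasure \<nu> {z. r < norm z} < \<infinity>"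
    by (rule emeasure_large_jumps_finite[OF sets levy \<open>r > 0\<close>])
  define a where "a = hat_lip_const CARD('n) * T / \<rho> * exp (- (T / real N) * jump_rate \<nu> r)"
  define S where "S = (SUP t\<in>{0..T}. SUP x. ennreal (norm (DpH x (Dw1 t x) - DpH x (Dw2 t x))))"
  have "a > 0"
    using hat_lip_const_pos pos by (simp add: a_def)
  have "(SUP t\<in>{0..T}. \<integral>\<^sup>+ x. ennreal \<bar>fpk_dens \<nu> DpH Dw1 \<rho> (T / real N) r m0 t x
                                 - fpk_dens \<nu> DpH Dw2 \<rho> (T / real N) r m0 t x\<bar> \<partial>lborel)
      \<le> ennreal a * S"
  proof (cases "S = \<infinity>")
    case True
    thus ?thesis
      using \<open>a > 0\<close> by (simp add: ennreal_mult_top)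
  next
    case False
    define M where "M = enn2real S"
    have "S = ennreal M" and "0 \<le> M"
      using False by (simp_all add: M_def less_top)
    have bound: "norm (DpH x (Dw1 t x) - DpH x (Dw2 t x)) \<le> M" if "t \<in> {0..T}" for t x
    proof -
      have "ennreal (norm (DpH x (Dw1 t x) - DpH x (Dw2 t x))) \<le> S"
        unfolding S_def by (rule SUP_upper2[OF that]) (rule SUP_upper, simp)
      thus ?thesis
        using \<open>S = ennreal M\<close> \<open>0 \<le> M\<close> by simp
    qed
    have "exp (- (T / real N) * jump_rate \<nu> r) * hat_lip_const CARD('n) * T * M / \<rho> = a * M"
      by (simp add: a_def field_simps)
    hence scale: "ennreal (exp (- (T / real N) * jump_rate \<nu> r) * hat_lip_const CARD('n) * T * M / \<rho>)
        = ennreal a * S"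
      using \<open>a > 0\<close> \<open>0 \<le> M\<close> \<open>S = ennreal M\<close> by (simp add: ennreal_mult)
    have "(\<integral>\<^sup>+ x. ennreal \<bar>fpk_dens \<nu> DpH Dw1 \<rho> (T / real N) r m0 t x
                          - fpk_dens \<nu> DpH Dw2 \<rho> (T / real N) r m0 t x\<bar> \<partial>lborel) \<le> ennreal a * S"
      if "t \<in> {0..T}" for t
      using nn_integral_abs_fpk_dens_diff_le[OF sets fin m0 pos, of DpH Dw1 Dw2 M, OF bound that] scale
      by simp
    thus ?thesis
      by (rule SUP_least)
  qed
  thus ?thesis
    unfolding a_def S_def .
qed

theorem mainTheorem15:
  shows "\<exists>c K. c > 0 \<and> K > 0 \<and>
    (\<forall>(\<nu>::(real^'n) measure) (H::real^'n \<Rightarrow> real^'n \<Rightarrow> real) DpH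
       (m0::(real^'n) measure) T (N::nat) \<rho> r (\<epsilon>::real)
       (u::(real \<Rightarrow> (real^'n) measure) \<Rightarrow> real \<Rightarrow> real^'n \<Rightarrow> real)
       (Du::(real \<Rightarrow> (real^'n) measure) \<Rightarrow> real \<Rightarrow> real^'n \<Rightarrow> real^'n)
       \<mu>1 \<mu>2.
      \<comment> \<open>(nu0): nu nonnegative measure on R^d minus 0 with int min(1,|z|^2) < infinity\<close>
      sets \<nu> = sets borel \<and> emeasure \<nu> {0} = 0 \<and>
      (\<integral>\<^sup>+ z. ennreal (min 1 (norm z ^ 2)) \<partial>\<nu>) < \<infinity> \<and>
      \<comment> \<open>(H1)\<close>
      (\<forall>x p. (H x has_derivative (\<lambda>v. DpH x p \<bullet> v)) (at p)) \<and>
      continuous_on UNIV (\<lambda>z. DpH (fst z) (snd z)) \<and>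
      (\<forall>R. \<exists>C. \<forall>x p. norm p \<le> R \<longrightarrow> norm (DpH x p) \<le> C) \<and>
      \<comment> \<open>initial datum, parameters\<close>
      prob_space m0 \<and> sets m0 = sets borel \<and>
      T > 0 \<and> N > 0 \<and> \<rho> > 0 \<and> r > 0 \<and> \<epsilon> > 0 \<and>
      \<comment> \<open>mu1, mu2 in C([0,T], P(R^d))\<close>
      weakly_continuous_flow T \<mu>1 \<and> weakly_continuous_flow T \<mu>2 \<and>
      \<comment> \<open>u[mu] is differentiable and Lipschitz in x, with spatial gradient Du[mu]\<close>
      (\<forall>\<mu>\<in>{\<mu>1, \<mu>2}. (\<forall>t x. (u \<mu> t has_derivative (\<lambda>v. Du \<mu> t x \<bullet> v)) (at x)) \<and>
          (\<exists>L. \<forall>t x y. \<bar>u \<mu> t x - u \<mu> t y\<bar> \<le> L * norm (x - y)))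
      \<longrightarrow>
      (SUP t\<in>{0..T}. \<integral>\<^sup>+ x. ennreal \<bar>fpk_dens \<nu> DpH (Du \<mu>1) \<rho> (T / real N) r m0 t x
                                   - fpk_dens \<nu> DpH (Du \<mu>2) \<rho> (T / real N) r m0 t x\<bar> \<partial>lborel)
      \<le> ennreal (c * K * T / \<rho> * exp (- (T / real N) * jump_rate \<nu> r)) *
        (SUP t\<in>{0..T}. SUP x. ennreal (norm (DpH x (Du \<mu>1 t x) - DpH x (Du \<mu>2 t x)))))"
  by (intro exI[of _ "hat_lip_const CARD('n)"] exI[of _ 1] conjI hat_lip_const_pos zero_less_one allI impI,
      elim conjE, unfold mult_1_right, rule sup_nn_integral_abs_fpk_dens_diff_le; assumption)

end
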